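(* Let $\mathbb{A}\in\{\mathtt{p2p},\mathtt{sb},\mathtt{bag}\}$. For every $\rho\in\Gamma^*$ and every $w\in\Sigma^*$ such that $w$ is $\mathbb{A}$-channel-compliant and agrees with $\rho$, there exists $u\in\Sigma^*$ such that $wu$ is $\mathbb{A}$-channel-compliant and $wu\equiv\mathrm{split}(\rho)$.
   Context: $\mathcal{P}$ is a set of participants and $\mathcal{V}$ a set of message values. $\Gamma=\{p\to q:m\mid p,q\in\mathcal{P},m\in\mathcal{V}\}$. $\Sigma=\Sigma_!\cup\Sigma_?$ with $\mathsf{snd}(p,q,m)$ ($p$ sends $m$ to $q$) and $\mathsf{rcv}(p,q,m)$ ($q$ receives $m$ from $p$); $\Sigma_p$ = send events with sender $p$ and receive events with receiver $p$. $w\Downarrow_\Delta$ deletes letters outside $\Delta$; $\le$ is the prefix order. $\mathrm{split}$ is the homomorphism with $p\to q:m\mapsto\mathsf{snd}(p,q,m)\mathsf{rcv}(p,q,m)$. $w\equiv w'$ iff $w\Downarrow_{\Sigma_p}=w'\Downarrow_{\Sigma_p}$ for all $p$. $w$ agrees with $\rho$ if $w\Downarrow_{\Sigma_p}\le\mathrm{split}(\rho)\Downarrow_{\Sigma_p}$ for all $p$. A network architecture consists of channels $C$, a map $\xi:\mathcal{P}\times\mathcal{P}\to C$, a buffer type with contents $B$, empty contents $b_0$ and partial operations $\mathit{insert}(\mu),\mathit{remove}(\mu):B\rightharpoonup B$ for messages $\mu\in M=\mathcal{P}\times\mathcal{P}\times\mathcal{V}$. Starting with every channel holding $b_0$, letter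 $\mathsf{snd}(p,q,m)$ applies $\mathit{insert}((p,q,m))$ to channel $\xi(p,q)$ and $\mathsf{rcv}(p,q,m)$ applies $\mathit{remove}((p,q,m))$ to channel $\xi(p,q)$; $w\in\Sigma^*$ is channel-compliant if all these applications are defined. FIFO buffers: $B=M^*$, $b_0=\varepsilon$, $\mathit{insert}(\mu)(b)=b\mu$, $\mathit{remove}(\mu)(b)$ defined iff $b=\mu b'$, then equal to $b'$. Bag buffers: $B$ = finite multisets over $M$, $b_0=\emptyset$, insert adds one copy, $\mathit{remove}(\mu)$ defined iff $\mu$ occurs, removing one copy. $\mathtt{p2p}$: FIFO, $C=\mathcal{P}\times\mathcal{P}$, $\xi(p,q)=(p,q)$. $\mathtt{sb}$ (senderbox): FIFO, $C=\mathcal{P}$, $\xi(p,q)=p$. $\mathtt{bag}$: bag buffers with a single channel ($\xi$ constant). *)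

theory Defs
  imports Main "HOL-Library.Multiset" "HOL-Library.Sublist"
begin

text \<open>Messages (letters of Gamma): p \<rightarrow> q : m\<close>
datatype ('p, 'v) msg = Msg 'p 'p 'v

text \<open>Events (letters of Sigma): snd(p,q,m) and rcv(p,q,m)\<close>
datatype ('p, 'v) event = Snd 'p 'p 'v | Rcv 'p 'p 'v

definition split :: "('p, 'v) msg list \<Rightarrow> ('p, 'v) event list" where
  "split \<rho> = concat (map (\<lambda>x. case x of Msg p q m \<Rightarrow> [Snd p q m, Rcv p q m]) \<rho>)"

fun in_Sigma :: "'p \<Rightarrow> ('p, 'v) event \<Rightarrow> bool" where
  "in_Sigma r (Snd p q m) = (p = r)"
| "in_Sigma r (Rcv p q m) = (q = r)"

definition proj :: "'p \<Rightarrow> ('p, 'v) event list \<Rightarrow> ('p, 'v) event list" where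
  "proj p w = filter (in_Sigma p) w"

definition equiv_words :: "('p, 'v) event list \<Rightarrow> ('p, 'v) event list \<Rightarrow> bool" where
  "equiv_words w w' = (\<forall>p. proj p w = proj p w')"

definition agrees :: "('p, 'v) event list \<Rightarrow> ('p, 'v) msg list \<Rightarrow> bool" where
  "agrees w \<rho> = (\<forall>p. prefix (proj p w) (proj p (split \<rho>)))"

fun exec :: "('p \<Rightarrow> 'p \<Rightarrow> 'c) \<Rightarrow> ('p \<times> 'p \<times> 'v \<Rightarrow> 'b \<Rightarrow> 'b option)
    \<Rightarrow> ('p \<times> 'p \<times> 'v \<Rightarrow> 'b \<Rightarrow> 'b option) \<Rightarrow> ('c \<Rightarrow> 'b) \<Rightarrow> ('p, 'v) event list \<Rightarrow> ('c \<Rightarrow> 'b) option" where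
  "exec xi ins rem s [] = Some s"
| "exec xi ins rem s (Snd p q m # w) =
     (case ins (p, q, m) (s (xi p q)) of None \<Rightarrow> None
      | Some b \<Rightarrow> exec xi ins rem (s(xi p q := b)) w)"
| "exec xi ins rem s (Rcv p q m # w) =
     (case rem (p, q, m) (s (xi p q)) of None \<Rightarrow> None
      | Some b \<Rightarrow> exec xi ins rem (s(xi p q := b)) w)"

definition channel_compliant :: "('p \<Rightarrow> 'p \<Rightarrow> 'c) \<Rightarrow> ('p \<times> 'p \<times> 'v \<Rightarrow> 'b \<Rightarrow> 'b option)
    \<Rightarrow> ('p \<times> 'p \<times> 'v \<Rightarrow> 'b \<Rightarrow> 'b option) \<Rightarrow> 'b \<Rightarrow> ('p, 'v) event list \<Rightarrow> bool" where
  "channel_compliant xi ins rem b0 w = (exec xi ins rem (\<lambda>_. b0) w \<noteq> None)"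

definition fifo_insert :: "'a \<Rightarrow> 'a list \<Rightarrow> 'a list option" where
  "fifo_insert \<mu> b = Some (b @ [\<mu>])"

definition fifo_remove :: "'a \<Rightarrow> 'a list \<Rightarrow> 'a list option" where
  "fifo_remove \<mu> b = (case b of [] \<Rightarrow> None | x # b' \<Rightarrow> if x = \<mu> then Some b' else None)"

definition bag_insert :: "'a \<Rightarrow> 'a multiset \<Rightarrow> 'a multiset option" where
  "bag_insert \<mu> B = Some (add_mset \<mu> B)"

definition bag_remove :: "'a \<Rightarrow> 'a multiset \<Rightarrow> 'a multiset option" where
  "bag_remove \<mu> B = (if \<mu> \<in># B then Some (B - {#\<mu>#}) else None)"

datatype arch = P2P | SB | BAG

definition compliant :: "arch \<Rightarrow> ('p, 'v) event list \<Rightarrow> bool" where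
  "compliant A w = (case A of
      P2P \<Rightarrow> channel_compliant (\<lambda>p q. (p, q)) fifo_insert fifo_remove [] w
    | SB \<Rightarrow> channel_compliant (\<lambda>p q. p) fifo_insert fifo_remove [] w
    | BAG \<Rightarrow> channel_compliant (\<lambda>p q. ()) bag_insert bag_remove {#} w)"

end

theory Submission
  imports Defs
begin

text \<open>
  Extend \<open>w\<close> one event at a time, preserving compliance and agreement with \<open>\<rho>\<close>.
  Agreement bounds the length of \<open>w\<close> by that of \<open>split \<rho>\<close>, so this terminates, and it
  can only get stuck once \<open>w \<equiv> split \<rho>\<close>.  For the extension step, write the shortest
  prefix of \<open>\<rho>\<close> whose events do not all occur in \<open>w\<close> (per participant) as
  \<open>\<alpha> (p \<rightarrow> q : m)\<close>.  If \<open>p\<close> has not sent \<open>m\<close> yet, \<open>p\<close> sends it; otherwise \<open>q\<close> has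
  not received it yet, and it can.  For a bag this holds because \<open>w\<close> contains more sends
  than receives of \<open>(p, q, m)\<close>.  For FIFO channels owned by their sender (\<open>p2p\<close> and
  \<open>sb\<close>), the messages sent on the channel before \<open>(p, q, m)\<close> are exactly those of \<open>\<alpha>\<close>,
  and counting shows that they are exactly the messages received from it, so
  \<open>(p, q, m)\<close> is at its head.
\<close>

fun owner :: "('p, 'v) event \<Rightarrow> 'p" where
  "owner (Snd p q m) = p"
| "owner (Rcv p q m) = q"

lemma in_Sigma_iff_owner: "in_Sigma r e \<longleftrightarrow> owner e = r"
  by (cases e) auto

lemma proj_Nil [simp]: "proj r [] = []"
  by (simp add: proj_def)

lemma proj_append [simp]: "proj r (v @ w) = proj r v @ proj r w"
  by (simp add: proj_def)

lemma proj_Cons [simp]: "proj r (e # w) = (if owner e = r then e # proj r w else proj r w)"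
  by (simp add: proj_def in_Sigma_iff_owner)

lemma split_Nil [simp]: "split [] = []"
  by (simp add: split_def)

lemma split_Cons [simp]: "split (Msg p q m # \<rho>) = Snd p q m # Rcv p q m # split \<rho>"
  by (simp add: split_def)

lemma split_append [simp]: "split (\<alpha> @ \<beta>) = split \<alpha> @ split \<beta>"
  by (simp add: split_def)

lemma count_proj_owner: "count (mset (proj (owner e) w)) e = count (mset w) e"
  by (simp add: proj_def mset_filter in_Sigma_iff_owner)

lemma mset_subseteq_if_proj_prefix:
  assumes "\<And>r. prefix (proj r v) (proj r w)"
  shows "mset v \<subseteq># mset w"
proof (rule mset_subset_eqI)
  fix e
  have "count (mset (proj (owner e) v)) e \<le> count (mset (proj (owner e) w)) e"
    using assms[of "owner e"] by (auto simp: prefix_def)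
  then show "count (mset v) e \<le> count (mset w) e"
    by (simp add: count_proj_owner)
qed

lemma count_split_Snd_eq_Rcv: "count (mset (split \<rho>)) (Snd p q m) = count (mset (split \<rho>)) (Rcv p q m)"
proof (induction \<rho>)
  case (Cons \<mu> \<rho>)
  then show ?case by (cases \<mu>) auto
qed simp

lemma prefix_between_eq:
  assumes "prefix xs ys" "prefix ys (xs @ x # zs)" "\<not> prefix (xs @ [x]) ys"
  shows "ys = xs"
proof -
  obtain a where ys: "ys = xs @ a" using assms(1) by (auto simp: prefix_def)
  then have "prefix a (x # zs)" using assms(2) by simp
  then show ?thesis using assms(3) ys by (cases a) auto
qed

lemma first_failing_prefix:
  assumes "P []" "\<not> P xs"
  obtains \<alpha> x \<beta> where "xs = \<alpha> @ x # \<beta>" "P \<alpha>" "\<not> P (\<alpha> @ [x])"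
  using assms(2)
proof (induction xs rule: rev_induct)
  case (snoc x xs)
  show ?case
  proof (cases "P xs")
    case True
    then show ?thesis using snoc by (intro snoc.prems(1)[of xs x "[]"]) simp_all
  next
    case False
    then show ?thesis using snoc.IH snoc.prems(1) by (metis append.assoc append_Cons)
  qed
qed (use assms(1) in simp)

definition executed :: "('p, 'v) event list \<Rightarrow> ('p, 'v) msg list \<Rightarrow> bool" where
  "executed w \<alpha> \<longleftrightarrow> (\<forall>r. prefix (proj r (split \<alpha>)) (proj r w))"

lemma executed_Nil: "executed w []"
  by (simp add: executed_def)

lemma equiv_words_if_agrees_executed:
  "agrees w \<rho> \<Longrightarrow> executed w \<rho> \<Longrightarrow> equiv_words w (split \<rho>)"
  unfolding agrees_def executed_def equiv_words_def by (metis prefix_order.antisym)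

lemma length_le_if_agrees: "agrees w \<rho> \<Longrightarrow> length w \<le> length (split \<rho>)"
  unfolding agrees_def by (metis mset_subseteq_if_proj_prefix size_mset size_mset_mono)

lemma agrees_snoc:
  assumes "agrees w \<rho>" "prefix (proj (owner e) w @ [e]) (proj (owner e) (split \<rho>))"
  shows "agrees (w @ [e]) \<rho>"
  using assms by (auto simp: agrees_def)

fun sent_on :: "('p \<Rightarrow> 'p \<Rightarrow> 'c) \<Rightarrow> 'c \<Rightarrow> ('p, 'v) event list \<Rightarrow> ('p \<times> 'p \<times> 'v) list" where
  "sent_on xi c [] = []"
| "sent_on xi c (Snd p q m # w) = (if xi p q = c then [(p, q, m)] else []) @ sent_on xi c w"
| "sent_on xi c (Rcv p q m # w) = sent_on xi c w"

fun received_on :: "('p \<Rightarrow> 'p \<Rightarrow> 'c) \<Rightarrow> 'c \<Rightarrow> ('p, 'v) event list \<Rightarrow> ('p \<times> 'p \<times> 'v) list" where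
  "received_on xi c [] = []"
| "received_on xi c (Rcv p q m # w) = (if xi p q = c then [(p, q, m)] else []) @ received_on xi c w"
| "received_on xi c (Snd p q m # w) = received_on xi c w"

lemma sent_on_append [simp]: "sent_on xi c (v @ w) = sent_on xi c v @ sent_on xi c w"
  by (induction xi c v rule: sent_on.induct) auto

lemma count_sent_on:
  "count (mset (sent_on xi c w)) (p, q, m) = (if xi p q = c then count (mset w) (Snd p q m) else 0)"
  by (induction xi c w rule: sent_on.induct) auto

lemma count_received_on:
  "count (mset (received_on xi c w)) (p, q, m) = (if xi p q = c then count (mset w) (Rcv p q m) else 0)"
  by (induction xi c w rule: received_on.induct) auto

lemma received_on_split: "received_on xi c (split \<rho>) = sent_on xi c (split \<rho>)"
proof (induction \<rho>)
  case (Cons \<mu> \<rho>)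
  then show ?case by (cases \<mu>) auto
qed simp

lemma received_on_mono:
  fixes v w :: "('p, 'v) event list"
  assumes "mset v \<subseteq># mset w"
  shows "mset (received_on xi c v) \<subseteq># mset (received_on xi c w)"
proof (rule mset_subset_eqI)
  fix x :: "'p \<times> 'p \<times> 'v"
  obtain p q m where "x = (p, q, m)" by (cases x)
  then show "count (mset (received_on xi c v)) x \<le> count (mset (received_on xi c w)) x"
    using assms by (auto simp: count_received_on mset_subset_eq_count)
qed

lemma sent_on_proj_sender:
  assumes "\<And>a b. xi a b = c \<Longrightarrow> a = p"
  shows "sent_on xi c (proj p w) = sent_on xi c w"
proof (induction w)
  case (Cons e w)
  show ?case
  proof (cases e)
    case (Snd a b m)
    then show ?thesis using Cons assms[of a b] by (cases "a = p") auto
  qed (simp add: Cons)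
qed simp

lemma exec_append:
  "exec xi ins rem s (v @ w) =
     (case exec xi ins rem s v of None \<Rightarrow> None | Some s' \<Rightarrow> exec xi ins rem s' w)"
proof (induction v arbitrary: s)
  case (Cons e v)
  show ?case
  proof (cases e)
    case (Snd p q m)
    then show ?thesis by (cases "ins (p, q, m) (s (xi p q))") (simp_all add: Cons.IH fun_upd_def)
  next
    case (Rcv p q m)
    then show ?thesis by (cases "rem (p, q, m) (s (xi p q))") (simp_all add: Cons.IH fun_upd_def)
  qed
qed simp

lemma exec_fifo_channel:
  "exec xi fifo_insert fifo_remove s w = Some s' \<Longrightarrow> s c @ sent_on xi c w = received_on xi c w @ s' c"
proof (induction w arbitrary: s)
  case (Cons e w)
  show ?case
  proof (cases e)
    case (Snd p q m)
    then have "exec xi fifo_insert fifo_remove (s(xi p q := s (xi p q) @ [(p, q, m)])) w = Some s'"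
      using Cons.prems by (simp add: fifo_insert_def[abs_def])
    from Cons.IH[OF this] show ?thesis using Snd by auto
  next
    case (Rcv p q m)
    then obtain b where rem: "fifo_remove (p, q, m) (s (xi p q)) = Some b"
      and exec: "exec xi fifo_insert fifo_remove (s(xi p q := b)) w = Some s'"
      using Cons.prems by (auto split: option.splits)
    have "s (xi p q) = (p, q, m) # b"
      using rem by (auto simp: fifo_remove_def split: list.splits if_splits)
    with Cons.IH[OF exec] show ?thesis using Rcv by (auto split: if_splits)
  qed
qed simp

lemma exec_bag_channel:
  "exec xi bag_insert bag_remove s w = Some s' \<Longrightarrow>
     s c + mset (sent_on xi c w) = mset (received_on xi c w) + s' c"
proof (induction w arbitrary: s)
  case (Cons e w)
  show ?case
  proof (cases e)
    case (Snd p q m)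
    then have "exec xi bag_insert bag_remove (s(xi p q := add_mset (p, q, m) (s (xi p q)))) w = Some s'"
      using Cons.prems by (simp add: bag_insert_def[abs_def])
    from Cons.IH[OF this] show ?thesis using Snd by auto
  next
    case (Rcv p q m)
    then obtain b where rem: "bag_remove (p, q, m) (s (xi p q)) = Some b"
      and exec: "exec xi bag_insert bag_remove (s(xi p q := b)) w = Some s'"
      using Cons.prems by (auto split: option.splits)
    have "s (xi p q) = add_mset (p, q, m) b"
      using rem by (auto simp: bag_remove_def split: if_splits)
    with Cons.IH[OF exec] show ?thesis using Rcv by (auto split: if_splits)
  qed
qed simp

text \<open>Read \<open>S\<close> as the messages enqueued on a FIFO channel, \<open>R\<close> as those dequeued,
  and \<open>s\<close> as its content.\<close>

lemma head_after_matched_prefix: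
  assumes "R @ s = S" "prefix (A @ [x]) S" "mset A \<subseteq># mset R" "count (mset R) x \<le> count (mset A) x"
  shows "\<exists>s'. s = x # s'"
proof -
  have not_longer: "\<not> prefix (A @ [x]) R"
  proof
    assume "prefix (A @ [x]) R"
    then have "count (mset (A @ [x])) x \<le> count (mset R) x" by (auto simp: prefix_def)
    then show False using assms(4) by simp
  qed
  have "prefix R (A @ [x])"
    using prefix_same_cases[of "A @ [x]" S R] assms(1,2) not_longer by auto
  then have "prefix R A" using not_longer by auto
  moreover have "length A \<le> length R"
    using assms(3) by (metis size_mset size_mset_mono)
  ultimately have "R = A" by (metis leD prefix_length_less strict_prefixI)
  then show ?thesis using assms(1,2) by (auto simp: prefix_def)
qed

lemma fifo_receivable:
  assumes sender: "\<And>a b a' b'. xi a b = xi a' b' \<Longrightarrow> a = a'"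
    and exec: "exec xi fifo_insert fifo_remove (\<lambda>_. []) w = Some s"
    and executed: "executed w \<alpha>"
    and sent: "prefix (proj p (split \<alpha>) @ [Snd p q m]) (proj p w)"
    and unreceived: "count (mset w) (Rcv p q m) = count (mset (split \<alpha>)) (Rcv p q m)"
  shows "\<exists>b. s (xi p q) = (p, q, m) # b"
proof -
  define c where "c = xi p q"
  define A where "A = sent_on xi c (split \<alpha>)"
  have sent_on_proj: "sent_on xi c (proj p v) = sent_on xi c v" for v
    by (rule sent_on_proj_sender) (use sender in \<open>auto simp: c_def\<close>)
  have "received_on xi c w @ s c = sent_on xi c w"
    using exec_fifo_channel[OF exec, of c] by simp
  moreover have "prefix (A @ [(p, q, m)]) (sent_on xi c w)"
  proof -
    from sent obtain z where z: "proj p w = proj p (split \<alpha>) @ Snd p q m # z"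
      by (auto simp: prefix_def)
    have "sent_on xi c w = sent_on xi c (proj p w)"
      by (rule sent_on_proj[symmetric])
    also have "\<dots> = sent_on xi c (proj p (split \<alpha>)) @ (p, q, m) # sent_on xi c z"
      by (simp add: z c_def)
    also have "sent_on xi c (proj p (split \<alpha>)) = A"
      by (simp add: A_def sent_on_proj)
    finally show ?thesis by simp
  qed
  moreover have "mset A \<subseteq># mset (received_on xi c w)"
    using received_on_mono[OF mset_subseteq_if_proj_prefix] executed
    by (metis A_def executed_def received_on_split)
  moreover have "count (mset (received_on xi c w)) (p, q, m) \<le> count (mset A) (p, q, m)"
    using unreceived count_split_Snd_eq_Rcv[of \<alpha> p q m]
    by (simp add: A_def c_def count_sent_on count_received_on)
  ultimately show ?thesis
    unfolding c_def by (intro head_after_matched_prefix[of _ _ _ A]) simp_all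
qed

lemma bag_receivable:
  assumes exec: "exec xi bag_insert bag_remove (\<lambda>_. {#}) w = Some s"
    and "count (mset w) (Rcv p q m) < count (mset w) (Snd p q m)"
  shows "(p, q, m) \<in># s (xi p q)"
proof -
  have "mset (sent_on xi (xi p q) w) = mset (received_on xi (xi p q) w) + s (xi p q)"
    using exec_bag_channel[OF exec, of "xi p q"] by simp
  then have "count (mset w) (Snd p q m) = count (mset w) (Rcv p q m) + count (s (xi p q)) (p, q, m)"
    by (metis count_received_on count_sent_on count_union)
  then show ?thesis using assms(2) by simp
qed

lemma count_Rcv_less_count_Snd:
  assumes sent: "prefix (proj p (split \<alpha>) @ [Snd p q m]) (proj p w)"
    and unreceived: "count (mset w) (Rcv p q m) = count (mset (split \<alpha>)) (Rcv p q m)"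
  shows "count (mset w) (Rcv p q m) < count (mset w) (Snd p q m)"
proof -
  have "count (mset (proj p (split \<alpha>) @ [Snd p q m])) (Snd p q m) \<le> count (mset (proj p w)) (Snd p q m)"
    using sent by (auto simp: prefix_def)
  then show ?thesis
    using unreceived count_split_Snd_eq_Rcv[of \<alpha> p q m]
      count_proj_owner[of "Snd p q m" w] count_proj_owner[of "Snd p q m" "split \<alpha>"]
    by simp
qed

lemma channel_compliant_snoc_Snd:
  assumes "channel_compliant xi ins rem b0 w" "\<And>\<mu> b. ins \<mu> b \<noteq> None"
  shows "channel_compliant xi ins rem b0 (w @ [Snd p q m])"
proof -
  obtain s where "exec xi ins rem (\<lambda>_. b0) w = Some s"
    using assms(1) by (auto simp: channel_compliant_def)
  moreover obtain b where "ins (p, q, m) (s (xi p q)) = Some b"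
    using assms(2) by blast
  ultimately show ?thesis by (simp add: channel_compliant_def exec_append)
qed

lemma channel_compliant_snoc_Rcv:
  "exec xi ins rem (\<lambda>_. b0) w = Some s \<Longrightarrow> rem (p, q, m) (s (xi p q)) \<noteq> None \<Longrightarrow>
     channel_compliant xi ins rem b0 (w @ [Rcv p q m])"
  unfolding channel_compliant_def by (auto simp: exec_append split: option.splits)

lemma compliant_snoc_Snd: "compliant A w \<Longrightarrow> compliant A (w @ [Snd p q m])"
  by (cases A) (auto simp: compliant_def fifo_insert_def bag_insert_def intro!: channel_compliant_snoc_Snd)

lemma compliant_snoc_Rcv:
  assumes "compliant A w" "executed w \<alpha>"
    and sent: "prefix (proj p (split \<alpha>) @ [Snd p q m]) (proj p w)"
    and unreceived: "count (mset w) (Rcv p q m) = count (mset (split \<alpha>)) (Rcv p q m)"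
  shows "compliant A (w @ [Rcv p q m])"
proof (cases A)
  case P2P
  then obtain s where exec: "exec (\<lambda>p q. (p, q)) fifo_insert fifo_remove (\<lambda>_. []) w = Some s"
    using assms(1) by (auto simp: compliant_def channel_compliant_def)
  with fifo_receivable[OF _ exec assms(2-)] P2P show ?thesis
    by (auto simp: compliant_def fifo_remove_def intro!: channel_compliant_snoc_Rcv)
next
  case SB
  then obtain s where exec: "exec (\<lambda>p q. p) fifo_insert fifo_remove (\<lambda>_. []) w = Some s"
    using assms(1) by (auto simp: compliant_def channel_compliant_def)
  with fifo_receivable[OF _ exec assms(2-)] SB show ?thesis
    by (auto simp: compliant_def fifo_remove_def intro!: channel_compliant_snoc_Rcv)
next
  case BAG
  then obtain s where exec: "exec (\<lambda>p q. ()) bag_insert bag_remove (\<lambda>_. {#}) w = Some s"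
    using assms(1) by (auto simp: compliant_def channel_compliant_def)
  with bag_receivable[OF exec count_Rcv_less_count_Snd[OF sent unreceived]] BAG show ?thesis
    by (auto simp: compliant_def bag_remove_def intro!: channel_compliant_snoc_Rcv)
qed

lemma proj_receiver_if_sent:
  assumes agrees: "agrees w (\<alpha> @ Msg p q m # \<beta>)"
    and executed: "executed w \<alpha>" and not_executed: "\<not> executed w (\<alpha> @ [Msg p q m])"
    and sent: "prefix (proj p (split \<alpha>) @ [Snd p q m]) (proj p w)"
  shows "proj q w = proj q (split \<alpha>) @ (if q = p then [Snd p q m] else [])"
proof -
  define pending where "pending = (if q = p then [Snd p q m] else [])"
  obtain r where r: "\<not> prefix (proj r (split \<alpha>) @ proj r (split [Msg p q m])) (proj r w)"
    using not_executed by (auto simp: executed_def)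
  have "r = q"
  proof (rule ccontr)
    assume "r \<noteq> q"
    then show False
      using r sent executed by (cases "r = p") (auto simp: executed_def)
  qed
  with r have not_received: "\<not> prefix (proj q (split \<alpha>) @ pending @ [Rcv p q m]) (proj q w)"
    unfolding pending_def by (cases "q = p") simp_all
  have "prefix (proj q (split \<alpha>) @ pending) (proj q w)"
    using sent executed by (auto simp: executed_def pending_def)
  moreover have "prefix (proj q w) ((proj q (split \<alpha>) @ pending) @ Rcv p q m # proj q (split \<beta>))"
    using agrees[unfolded agrees_def, rule_format, of q]
    by (cases "q = p") (simp_all add: pending_def)
  ultimately show ?thesis
    using prefix_between_eq not_received unfolding pending_def by fastforce
qed

lemma agreeing_compliant_snoc:
  assumes compliant: "compliant A w" and agrees: "agrees w \<rho>"
    and not_equiv: "\<not> equiv_words w (split \<rho>)"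
  obtains e where "compliant A (w @ [e])" "agrees (w @ [e]) \<rho>"
proof -
  have "\<not> executed w \<rho>"
    using agrees not_equiv equiv_words_if_agrees_executed by blast
  then obtain \<alpha> \<mu> \<beta> where \<rho>: "\<rho> = \<alpha> @ \<mu> # \<beta>"
    and executed: "executed w \<alpha>" and not_executed: "\<not> executed w (\<alpha> @ [\<mu>])"
    using first_failing_prefix[of "executed w"] executed_Nil by metis
  obtain p q m where \<mu>: "\<mu> = Msg p q m" by (cases \<mu>)
  show ?thesis
  proof (cases "prefix (proj p (split \<alpha>) @ [Snd p q m]) (proj p w)")
    case sent: True
    have q_w: "proj q w = proj q (split \<alpha>) @ (if q = p then [Snd p q m] else [])"
      using proj_receiver_if_sent[OF agrees[unfolded \<rho> \<mu>] executed not_executed[unfolded \<mu>] sent] .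
    then have unreceived: "count (mset w) (Rcv p q m) = count (mset (split \<alpha>)) (Rcv p q m)"
      using count_proj_owner[of "Rcv p q m" w] count_proj_owner[of "Rcv p q m" "split \<alpha>"]
      by (cases "q = p") simp_all
    from q_w have "agrees (w @ [Rcv p q m]) \<rho>"
      using agrees by (intro agrees_snoc) (auto simp: \<rho> \<mu>)
    then show ?thesis using that compliant_snoc_Rcv[OF compliant executed sent unreceived] by blast
  next
    case not_sent: False
    have "prefix (proj p (split \<alpha>)) (proj p w)"
      using executed by (simp add: executed_def)
    moreover have "prefix (proj p w)
        (proj p (split \<alpha>) @ Snd p q m # (if q = p then [Rcv p q m] else []) @ proj p (split \<beta>))"
      using agrees[unfolded agrees_def, rule_format, of p] by (cases "q = p") (simp_all add: \<rho> \<mu>)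
    ultimately have "proj p w = proj p (split \<alpha>)"
      using not_sent by (rule prefix_between_eq)
    then have "agrees (w @ [Snd p q m]) \<rho>"
      using agrees by (intro agrees_snoc) (auto simp: \<rho> \<mu>)
    then show ?thesis using that compliant_snoc_Snd[OF compliant] by blast
  qed
qed

theorem lemma7p5:
  fixes A :: arch and \<rho> :: "('p, 'v) msg list" and w :: "('p, 'v) event list"
  assumes "compliant A w" and "agrees w \<rho>"
  shows "\<exists>u. compliant A (w @ u) \<and> equiv_words (w @ u) (split \<rho>)"
  using assms
proof (induction "length (split \<rho>) - length w" arbitrary: w rule: less_induct)
  case less
  show ?case
  proof (cases "equiv_words w (split \<rho>)")
    case True
    then show ?thesis using less.prems by (intro exI[of _ "[]"]) simp
  next
    case False
    then obtain e where e: "compliant A (w @ [e])" "agrees (w @ [e]) \<rho>"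
      using agreeing_compliant_snoc less.prems by blast
    moreover have "length (split \<rho>) - length (w @ [e]) < length (split \<rho>) - length w"
      using length_le_if_agrees[OF e(2)] by simp
    ultimately obtain u where "compliant A (w @ [e] @ u) \<and> equiv_words (w @ [e] @ u) (split \<rho>)"
      using less.hyps by (metis append.assoc)
    then show ?thesis by blast
  qed
qed

end
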